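(* Let $N\ge1$, $p\ge2$, $w,g\in L^1_{loc}(\mathbb{R}^N)$ positive a.e. Let $0<\delta\le\gamma$ and suppose $(\delta,p)$ belongs to the class $P_b$. Let $u\in C^1(\mathbb{R}^N)$, $u>0$, be a stable weak solution of $\operatorname{div}(w|\nabla u|^{p-2}\nabla u)=g(x)(u^{-\delta}+u^{-\gamma})$ in $\mathbb{R}^N$. Then for every $\beta\in(0,s_p)$ there is a constant $c>0$ (independent of $\psi$) such that for every nonnegative $\psi\in C^1_c(\mathbb{R}^N)$, $$\int_{\mathbb{R}^N} g\,(u^{-\delta}+u^{-\gamma})\,u^{-2\beta-p+1}\psi^p\,dx\le c\int_{\mathbb{R}^N} w\,u^{-2\beta}|\nabla\psi|^p\,dx.$$
   Context: Weak solution and stability are understood with $f(t)=-t^{-\delta}-t^{-\gamma}$, i.e. for the equation $-\operatorname{div}(w|\nabla u|^{p-2}\nabla u)=g f(u)$: $u\in C^1(\mathbb{R}^N)$ is a weak solution if $\int w|\nabla u|^{p-2}\nabla u\cdot\nabla\varphi\,dx=\int g f(u)\varphi\,dx$ for all $\varphi\in C^1_c(\mathbb{R}^N)$, and it is stable if for all $\varphi\in C^1_c(\mathbb{R}^N)$, $\int w|\nabla u|^{p-2}|\nabla\varphi|^2+(p-2)\int w|\nabla u|^{p-4}(\nabla u\cdot\nabla\varphi)^2-\int g f'(u)\varphi^2\ge0$ (the middle integrand is $0$ where $\nabla u=0$). The class $P_b$: $(\delta,p)\in P_b$ if either $p=2$ and $\delta>0$, or $p>2$ and $\delta>\frac{(p-1)^2}{4}$.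 The number $s_p$ is $s_p=\delta+\sqrt{\delta^2+\delta}$ if $p=2$ and $s_p=\frac{2\delta}{p-1}-\frac{p-1}{2}$ if $p>2$. *)

theory Defs
  imports "HOL-Analysis.Analysis"
begin

definition grad :: "('a::euclidean_space \<Rightarrow> real) \<Rightarrow> 'a \<Rightarrow> 'a" where
  "grad u x = (\<Sum>i\<in>Basis. frechet_derivative u (at x) i *\<^sub>R i)"

definition C1 :: "('a::euclidean_space \<Rightarrow> real) \<Rightarrow> bool" where
  "C1 u \<longleftrightarrow> (\<forall>x. u differentiable (at x)) \<and> continuous_on UNIV (grad u)"

definition C1c :: "('a::euclidean_space \<Rightarrow> real) \<Rightarrow> bool" where
  "C1c \<phi> \<longleftrightarrow> C1 \<phi> \<and> bounded {x. \<phi> x \<noteq> 0}"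

definition locally_integrable :: "('a::euclidean_space \<Rightarrow> real) \<Rightarrow> bool" where
  "locally_integrable f \<longleftrightarrow> (\<forall>K. compact K \<longrightarrow> set_integrable lborel K f)"

text \<open>Power of a nonnegative number with the convention r^0 = 1 (also for r = 0);
  for r = 0 and a \<noteq> 0 the value is 0 (the relevant integrands vanish there).\<close>
definition gpow :: "real \<Rightarrow> real \<Rightarrow> real" where
  "gpow r a = (if a = 0 then 1 else r powr a)"

definition fsing :: "real \<Rightarrow> real \<Rightarrow> real \<Rightarrow> real" where
  "fsing \<delta> \<gamma> t = - (t powr (-\<delta>)) - t powr (-\<gamma>)"

definition fsing' :: "real \<Rightarrow> real \<Rightarrow> real \<Rightarrow> real" where
  "fsing' \<delta> \<gamma> t = \<delta> * t powr (-\<delta>-1) + \<gamma> * t powr (-\<gamma>-1)"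

definition weak_solution ::
  "real \<Rightarrow> real \<Rightarrow> real \<Rightarrow> ('a::euclidean_space \<Rightarrow> real) \<Rightarrow> ('a \<Rightarrow> real) \<Rightarrow> ('a \<Rightarrow> real) \<Rightarrow> bool" where
  "weak_solution p \<delta> \<gamma> w g u \<longleftrightarrow>
     (\<forall>\<phi>. C1c \<phi> \<longrightarrow>
        (\<integral>x. w x * gpow (norm (grad u x)) (p-2) * (grad u x \<bullet> grad \<phi> x) \<partial>lborel)
        = (\<integral>x. g x * fsing \<delta> \<gamma> (u x) * \<phi> x \<partial>lborel))"

definition stable ::
  "real \<Rightarrow> real \<Rightarrow> real \<Rightarrow> ('a::euclidean_space \<Rightarrow> real) \<Rightarrow> ('a \<Rightarrow> real) \<Rightarrow> ('a \<Rightarrow> real) \<Rightarrow> bool" where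
  "stable p \<delta> \<gamma> w g u \<longleftrightarrow>
     (\<forall>\<phi>. C1c \<phi> \<longrightarrow>
        (\<integral>x. w x * gpow (norm (grad u x)) (p-2) * (norm (grad \<phi> x))\<^sup>2 \<partial>lborel)
        + (p-2) * (\<integral>x. (if grad u x = 0 then 0 else
              w x * norm (grad u x) powr (p-4) * (grad u x \<bullet> grad \<phi> x)\<^sup>2) \<partial>lborel)
        - (\<integral>x. g x * fsing' \<delta> \<gamma> (u x) * (\<phi> x)\<^sup>2 \<partial>lborel) \<ge> 0)"

definition P_b :: "real \<Rightarrow> real \<Rightarrow> bool" where
  "P_b \<delta> p \<longleftrightarrow> (p = 2 \<and> \<delta> > 0) \<or> (p > 2 \<and> \<delta> > (p-1)\<^sup>2 / 4)"

definition s_p :: "real \<Rightarrow> real \<Rightarrow> real" where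
  "s_p \<delta> p = (if p = 2 then \<delta> + sqrt (\<delta>\<^sup>2 + \<delta>) else 2*\<delta>/(p-1) - (p-1)/2)"

end

theory Submission
  imports Defs
begin

text \<open>Put \<open>\<alpha> = \<beta> + (p-2)/2\<close>. Testing the weak formulation with \<open>u^(-2\<alpha>-1) \<psi>^p\<close> and the
  stability inequality with \<open>u^(-\<alpha>) \<psi>^(p/2)\<close> gives two linear relations between
  \<open>I = \<integral> w |\<nabla>u|^p u^(-2\<alpha>-2) \<psi>^p\<close>, a mixed term \<open>J\<close>,
  \<open>K = \<integral> w |\<nabla>u|^(p-2) u^(-2\<alpha>) \<psi>^(p-2) |\<nabla>\<psi>|^2\<close> and the left-hand side \<open>F\<close> of the estimate.
  Eliminating \<open>J\<close> with \<open>|J| \<le> \<epsilon> I + K/(4\<epsilon>)\<close> bounds \<open>F\<close> and \<open>I\<close> by a multiple of \<open>K\<close>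
  exactly when \<open>(p-1) \<alpha>^2 < \<delta> (2\<alpha>+1)\<close>, which is the condition \<open>\<beta> < s_p\<close>. Young's inequality
  gives \<open>K \<le> \<epsilon> I + C \<integral> w u^(-2\<beta>) |\<nabla>\<psi>|^p\<close>, and for small \<open>\<epsilon>\<close> the \<open>I\<close>-term is absorbed.\<close>

section \<open>Calculus for \<open>C\<^sup>1\<close> functions\<close>

lemma grad_eqI:
  fixes f :: "'a::euclidean_space \<Rightarrow> real"
  assumes "(f has_derivative (\<lambda>h. G \<bullet> h)) (at x)"
  shows "grad f x = G"
proof -
  have "frechet_derivative f (at x) = (\<lambda>h. G \<bullet> h)"
    using frechet_derivative_at[OF assms] by simp
  then show ?thesis unfolding grad_def by (simp add: euclidean_representation)
qed

lemma C1_has_derivative: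
  fixes f :: "'a::euclidean_space \<Rightarrow> real"
  assumes "C1 f"
  shows "(f has_derivative (\<lambda>h. grad f x \<bullet> h)) (at x)"
proof -
  have d: "(f has_derivative frechet_derivative f (at x)) (at x)"
    using assms frechet_derivative_works unfolding C1_def by blast
  have lin: "linear (frechet_derivative f (at x))"
    using d has_derivative_linear by blast
  have "frechet_derivative f (at x) h = grad f x \<bullet> h" for h
  proof -
    have "frechet_derivative f (at x) h = (\<Sum>i\<in>Basis. (h \<bullet> i) * (frechet_derivative f (at x) i \<bullet> 1))"
      using Linear_Algebra.linear_componentwise[OF lin, of h 1] by simp
    also have "\<dots> = grad f x \<bullet> h"
      unfolding grad_def by (simp add: inner_sum_right inner_commute mult.commute)
    finally show ?thesis .
  qed
  then have "frechet_derivative f (at x) = (\<lambda>h. grad f x \<bullet> h)" by (rule ext)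
  with d show ?thesis by simp
qed

lemma C1_imp_continuous_on: "C1 f \<Longrightarrow> continuous_on S f"
  unfolding C1_def
  by (meson continuous_at_imp_continuous_on differentiable_imp_continuous_within)

lemma C1I:
  fixes f :: "'a::euclidean_space \<Rightarrow> real"
  assumes "\<And>x. (f has_derivative (\<lambda>h. G x \<bullet> h)) (at x)" "continuous_on UNIV G"
  shows "C1 f"
proof -
  have "grad f = G" using grad_eqI[OF assms(1)] by blast
  then show ?thesis unfolding C1_def using assms differentiableI by blast
qed

lemma grad_eq_0_at_minimum:
  fixes f :: "'a::euclidean_space \<Rightarrow> real"
  assumes "C1 f" "\<forall>y. f y \<ge> 0" "f x = 0"
  shows "grad f x = 0"
proof -
  have "(\<lambda>h. grad f x \<bullet> h) = (\<lambda>h. 0)"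
    by (rule has_derivative_local_min[OF C1_has_derivative[OF assms(1)]]) (use assms in auto)
  then have "grad f x \<bullet> grad f x = 0" by metis
  then show ?thesis by simp
qed

lemma has_derivative_mult_grad:
  fixes f g :: "'a::euclidean_space \<Rightarrow> real"
  assumes "C1 f" "C1 g"
  shows "((\<lambda>x. f x * g x) has_derivative (\<lambda>h. (f x *\<^sub>R grad g x + g x *\<^sub>R grad f x) \<bullet> h)) (at x)"
  using has_derivative_mult[OF C1_has_derivative[OF assms(1)] C1_has_derivative[OF assms(2)], of x]
  by (simp add: inner_add_left algebra_simps)

lemma C1_mult:
  fixes f g :: "'a::euclidean_space \<Rightarrow> real"
  assumes "C1 f" "C1 g"
  shows "C1 (\<lambda>x. f x * g x)"
  by (rule C1I[OF has_derivative_mult_grad[OF assms]])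
    (use assms C1_imp_continuous_on in \<open>unfold C1_def, intro continuous_intros, auto\<close>)

lemma grad_mult:
  fixes f g :: "'a::euclidean_space \<Rightarrow> real"
  assumes "C1 f" "C1 g"
  shows "grad (\<lambda>x. f x * g x) x = f x *\<^sub>R grad g x + g x *\<^sub>R grad f x"
  by (rule grad_eqI[OF has_derivative_mult_grad[OF assms]])

text \<open>At a zero of a nonnegative \<open>C\<^sup>1\<close> function the gradient vanishes, so \<open>f x = o(|y - x|)\<close>
  there; this is what makes \<open>f powr r\<close> differentiable at such points for \<open>r \<ge> 1\<close>.\<close>
lemma has_derivative_powr_at_zero:
  fixes f :: "'a::euclidean_space \<Rightarrow> real"
  assumes "C1 f" "\<forall>y. f y \<ge> 0" "f x = 0" "r \<ge> 1"
  shows "((\<lambda>y. f y powr r) has_derivative (\<lambda>h. 0)) (at x)"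
proof -
  have "((\<lambda>y. norm ((f y - f x) - grad f x \<bullet> (y - x)) / norm (y - x)) \<longlongrightarrow> 0) (at x)"
    using C1_has_derivative[OF assms(1), of x] unfolding has_derivative_iff_norm by blast
  then have lim: "((\<lambda>y. \<bar>f y\<bar> / norm (y - x)) \<longlongrightarrow> 0) (at x)"
    using grad_eq_0_at_minimum[OF assms(1-3)] assms(3) by simp
  have "isCont f x"
    using C1_imp_continuous_on[OF assms(1), of UNIV] by (simp add: continuous_on_eq_continuous_at)
  then have "(f \<longlongrightarrow> 0) (at x)" using assms(3) isCont_def by metis
  then have "eventually (\<lambda>y. f y < 1) (at x)" by (rule order_tendstoD) simp
  then have bound: "eventually (\<lambda>y. norm (f y powr r - f x powr r - 0) / norm (y - x)
      \<le> \<bar>f y\<bar> / norm (y - x)) (at x)"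
  proof eventually_elim
    case (elim y)
    have "f y powr r \<le> f y"
      using powr_le_one_le[of "f y" r] elim assms(2,4) by (cases "f y = 0") (auto simp: less_eq_real_def)
    then show ?case using assms(2,3) by (simp add: divide_right_mono)
  qed
  have "((\<lambda>y. norm (f y powr r - f x powr r - 0) / norm (y - x)) \<longlongrightarrow> 0) (at x)"
    by (rule tendsto_sandwich[OF _ bound tendsto_const lim]) simp
  then show ?thesis unfolding has_derivative_iff_norm by simp
qed

lemma has_derivative_powr_grad:
  fixes f :: "'a::euclidean_space \<Rightarrow> real"
  assumes "C1 f" "\<forall>y. f y \<ge> 0" "f x > 0 \<or> r \<ge> 1"
  shows "((\<lambda>x. f x powr r) has_derivative (\<lambda>h. ((r * f x powr (r-1)) *\<^sub>R grad f x) \<bullet> h)) (at x)"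
proof (cases "f x = 0")
  case True
  then show ?thesis using has_derivative_powr_at_zero[OF assms(1,2) True] assms(3) by simp
next
  case False
  then have "f x > 0" using assms(2) by (metis less_eq_real_def)
  have "((\<lambda>x. f x powr r) has_derivative (\<lambda>h. (grad f x \<bullet> h) * (r * f x powr (r-1)))) (at x)"
    by (rule DERIV_compose_FDERIV[OF has_real_derivative_powr C1_has_derivative[OF assms(1)]])
      (use \<open>f x > 0\<close> in auto)
  then show ?thesis by (simp add: mult.commute)
qed

lemma C1_powr:
  fixes f :: "'a::euclidean_space \<Rightarrow> real"
  assumes "C1 f" "\<forall>y. f y \<ge> 0" "(\<forall>y. f y > 0) \<or> r \<ge> 1"
  shows "C1 (\<lambda>x. f x powr r)"
proof (rule C1I[OF has_derivative_powr_grad[OF assms(1,2)]])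
  show "f x > 0 \<or> r \<ge> 1" for x using assms(3) by blast
  have cf: "continuous_on UNIV f" "continuous_on UNIV (grad f)"
    using assms(1) C1_imp_continuous_on unfolding C1_def by auto
  show "continuous_on UNIV (\<lambda>x. (r * f x powr (r-1)) *\<^sub>R grad f x)"
  proof (cases "r = 1")
    case True
    have "(\<lambda>x. (r * f x powr (r-1)) *\<^sub>R grad f x) = grad f"
    proof
      fix x show "(r * f x powr (r-1)) *\<^sub>R grad f x = grad f x"
        using True grad_eq_0_at_minimum[OF assms(1,2), of x] by (cases "f x = 0") auto
    qed
    then show ?thesis using cf by metis
  next
    case False
    then have "(\<forall>y. f y > 0) \<or> r - 1 > 0" using assms(3) by auto
    then show ?thesis using cf assms(2)
      by (intro continuous_intros continuous_on_powr') (auto simp: less_imp_neq[symmetric])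
  qed
qed

lemma grad_powr:
  fixes f :: "'a::euclidean_space \<Rightarrow> real"
  assumes "C1 f" "\<forall>y. f y \<ge> 0" "f x > 0 \<or> r \<ge> 1"
  shows "grad (\<lambda>x. f x powr r) x = (r * f x powr (r-1)) *\<^sub>R grad f x"
  by (rule grad_eqI[OF has_derivative_powr_grad[OF assms]])

lemma C1_borel_measurable:
  "C1 f \<Longrightarrow> f \<in> borel_measurable borel"
  by (intro borel_measurable_continuous_onI C1_imp_continuous_on)

lemma C1_grad_borel_measurable:
  "C1 f \<Longrightarrow> grad f \<in> borel_measurable borel"
  unfolding C1_def by (intro borel_measurable_continuous_onI) auto

section \<open>Integrability of bounded integrands with bounded support\<close>

text \<open>Boundedness is tracked directly rather than through continuity because \<open>\<psi> powr 0\<close>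
  (needed for \<open>p = 2\<close>) jumps at the zeros of \<open>\<psi>\<close>; with \<open>0 powr r = 0\<close> every integrand below
  vanishes outside the support of \<open>\<psi>\<close>.\<close>
definition bdd_on :: "'a set \<Rightarrow> ('a \<Rightarrow> real) \<Rightarrow> bool" where
  "bdd_on K f \<longleftrightarrow> (\<exists>B. \<forall>x\<in>K. \<bar>f x\<bar> \<le> B)"

lemma bdd_on_continuous_on: "compact K \<Longrightarrow> continuous_on K f \<Longrightarrow> bdd_on K f"
  unfolding bdd_on_def
  by (metis compact_continuous_image compact_imp_bounded bounded_real image_eqI)

lemma bdd_on_const: "bdd_on K (\<lambda>x. c)"
  unfolding bdd_on_def by blast

lemma bdd_on_add: "bdd_on K f \<Longrightarrow> bdd_on K g \<Longrightarrow> bdd_on K (\<lambda>x. f x + g x)"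
  unfolding bdd_on_def by (metis abs_triangle_ineq add_mono order_trans)

lemma bdd_on_mult: "bdd_on K f \<Longrightarrow> bdd_on K g \<Longrightarrow> bdd_on K (\<lambda>x. f x * g x)"
  unfolding bdd_on_def
proof (elim exE)
  fix B C assume B: "\<forall>x\<in>K. \<bar>f x\<bar> \<le> B" and C: "\<forall>x\<in>K. \<bar>g x\<bar> \<le> C"
  have "\<bar>f x * g x\<bar> \<le> B * C" if "x \<in> K" for x
    unfolding abs_mult using B C that by (intro mult_mono) auto
  then show "\<exists>D. \<forall>x\<in>K. \<bar>f x * g x\<bar> \<le> D" by blast
qed

lemma bdd_on_powr:
  assumes "bdd_on K f" "\<forall>x. f x \<ge> 0" "r \<ge> 0"
  shows "bdd_on K (\<lambda>x. f x powr r)"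
proof -
  obtain B where "\<forall>x\<in>K. \<bar>f x\<bar> \<le> B" using assms(1) unfolding bdd_on_def by blast
  then have "\<forall>x\<in>K. \<bar>f x powr r\<bar> \<le> B powr r"
    using powr_mono2 assms(2,3) by simp
  then show ?thesis unfolding bdd_on_def by blast
qed

lemma integrable_mult_bounded_support:
  fixes w h :: "'a::euclidean_space \<Rightarrow> real"
  assumes "locally_integrable w" "bounded S" "h \<in> borel_measurable lborel"
    "\<And>x. x \<notin> S \<Longrightarrow> h x = 0" "bdd_on (closure S) h"
  shows "integrable lborel (\<lambda>x. w x * h x)"
proof -
  define K where "K = closure S"
  obtain B where B: "\<forall>x\<in>K. \<bar>h x\<bar> \<le> B" using assms(5) unfolding bdd_on_def K_def by blast
  have "compact K" unfolding K_def using assms(2) by (simp add: compact_closure)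
  then have wK: "integrable lborel (\<lambda>x. indicator K x * w x)"
    using assms(1) unfolding locally_integrable_def set_integrable_def by simp
  have eq: "(\<lambda>x. w x * h x) = (\<lambda>x. (indicator K x * w x) * h x)"
    using assms(4) closure_subset[of S] unfolding K_def by (intro ext) (auto simp: indicator_def)
  have "integrable lborel (\<lambda>x. (indicator K x * w x) * h x)"
  proof (rule Bochner_Integration.integrable_bound[where f="\<lambda>x. B * \<bar>indicator K x * w x\<bar>"])
    show "integrable lborel (\<lambda>x. B * \<bar>indicator K x * w x\<bar>)" using wK by auto
    show "(\<lambda>x. (indicator K x * w x) * h x) \<in> borel_measurable lborel"
      using wK assms(3) by measurable
    show "AE x in lborel. norm ((indicator K x * w x) * h x) \<le> norm (B * \<bar>indicator K x * w x\<bar>)"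
    proof (intro AE_I2)
      fix x
      have "\<bar>h x\<bar> * \<bar>w x\<bar> \<le> \<bar>B\<bar> * \<bar>w x\<bar>" if "x \<in> K"
        using B that by (intro mult_right_mono) force+
      then show "norm ((indicator K x * w x) * h x) \<le> norm (B * \<bar>indicator K x * w x\<bar>)"
        by (auto simp: indicator_def abs_mult mult.commute)
    qed
  qed
  then show ?thesis unfolding eq .
qed

section \<open>Pointwise inequalities\<close>

lemma mult_le_eps_square_add: "e > 0 \<Longrightarrow> (X::real) * Y \<le> e * X\<^sup>2 + (1/(4*e)) * Y\<^sup>2"
proof -
  assume e: "e > 0"
  have "e * X\<^sup>2 + (1/(4*e)) * Y\<^sup>2 - X * Y = (2*e*X - Y)\<^sup>2 / (4*e)"
    using e by (simp add: power2_eq_square field_simps)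
  moreover have "(2*e*X - Y)\<^sup>2 / (4*e) \<ge> 0" using e by simp
  ultimately show ?thesis by linarith
qed

lemma abs_mixed_term_le:
  fixes U s a G Dv e \<alpha> p :: real
  assumes "U > 0" "s \<ge> 0" "a \<ge> 0" "G \<ge> 0" "\<bar>Dv\<bar> \<le> a * G" "e > 0"
  shows "\<bar>U powr (-2*\<alpha>-1) * s powr (p-1) * Dv\<bar>
     \<le> e * (U powr (-2*\<alpha>-2) * s powr p * a\<^sup>2) + (1/(4*e)) * (U powr (-2*\<alpha>) * s powr (p-2) * G\<^sup>2)"
proof -
  define X where "X = U powr (-\<alpha>-1) * s powr (p/2) * a"
  define Y where "Y = U powr (-\<alpha>) * s powr (p/2-1) * G"
  have u1: "U powr (-\<alpha>-1) * U powr (-\<alpha>) = U powr (-2*\<alpha>-1)"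
    by (simp add: powr_add[symmetric] algebra_simps)
  have u2: "U powr (-\<alpha>-1) * U powr (-\<alpha>-1) = U powr (-2*\<alpha>-2)"
    by (simp add: powr_add[symmetric] algebra_simps)
  have u3: "U powr (-\<alpha>) * U powr (-\<alpha>) = U powr (-2*\<alpha>)"
    by (simp add: powr_add[symmetric] algebra_simps)
  have s1: "s powr (p/2) * s powr (p/2-1) = s powr (p-1)"
    by (simp add: powr_add[symmetric] algebra_simps)
  have s2: "s powr (p/2) * s powr (p/2) = s powr p"
    by (simp add: powr_add[symmetric] algebra_simps)
  have s3: "s powr (p/2-1) * s powr (p/2-1) = s powr (p-2)"
    by (simp add: powr_add[symmetric] algebra_simps)
  have XY: "X * Y = U powr (-2*\<alpha>-1) * s powr (p-1) * (a * G)"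
    unfolding X_def Y_def using u1 s1 by (simp add: algebra_simps)
  have X2: "X\<^sup>2 = U powr (-2*\<alpha>-2) * s powr p * a\<^sup>2"
    unfolding X_def power2_eq_square using u2 s2 by (simp add: algebra_simps)
  have Y2: "Y\<^sup>2 = U powr (-2*\<alpha>) * s powr (p-2) * G\<^sup>2"
    unfolding Y_def power2_eq_square using u3 s3 by (simp add: algebra_simps)
  have "\<bar>U powr (-2*\<alpha>-1) * s powr (p-1) * Dv\<bar> = U powr (-2*\<alpha>-1) * s powr (p-1) * \<bar>Dv\<bar>"
    by (simp add: abs_mult)
  also have "\<dots> \<le> U powr (-2*\<alpha>-1) * s powr (p-1) * (a * G)"
    using assms(5) by (intro mult_left_mono) auto
  also have "\<dots> = X * Y" using XY by simp
  also have "\<dots> \<le> e * X\<^sup>2 + (1/(4*e)) * Y\<^sup>2" by (rule mult_le_eps_square_add[OF assms(6)])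
  finally show ?thesis unfolding X2 Y2 .
qed

lemma Young_powr_eps:
  fixes p e :: real
  assumes "p > 2" "e > 0"
  shows "\<exists>C>0. \<forall>X Y. X \<ge> 0 \<longrightarrow> Y \<ge> 0 \<longrightarrow> X powr (p-2) * Y powr 2 \<le> e * X powr p + C * Y powr p"
proof -
  define l where "l = e powr (1/p)"
  have l: "l > 0" using assms unfolding l_def by simp
  have lp: "l powr p = e" using assms unfolding l_def by (simp add: powr_powr)
  define C where "C = (2/p) * l powr (-(p-2)*(p/2))"
  have C: "C > 0" using assms l unfolding C_def by simp
  have "X powr (p-2) * Y powr 2 \<le> e * X powr p + C * Y powr p" if XY: "X \<ge> 0" "Y \<ge> 0" for X Y
  proof -
    define A where "A = (l*X) powr (p-2)"
    define B where "B = l powr (-(p-2)) * Y powr 2"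
    have P1: "p/(p-2) > 1" "p/2 > 1" "1/(p/(p-2)) + 1/(p/2) = 1" using assms by (auto simp: field_simps)
    have A0: "A \<ge> 0" "B \<ge> 0" unfolding A_def B_def by auto
    have "A * B \<le> A powr (p/(p-2)) / (p/(p-2)) + B powr (p/2) / (p/2)"
      by (rule Youngs_inequality[OF P1 A0])
    moreover have "A * B = X powr (p-2) * Y powr 2"
    proof -
      have "l powr (p-2) * l powr (-(p-2)) = 1" using l by (simp add: powr_add[symmetric])
      then show ?thesis unfolding A_def B_def powr_mult by (simp add: algebra_simps)
    qed
    moreover have "A powr (p/(p-2)) = e * X powr p"
    proof -
      have "A powr (p/(p-2)) = (l*X) powr p" unfolding A_def powr_powr using assms by simp
      then show ?thesis unfolding powr_mult lp by simp
    qed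
    moreover have "B powr (p/2) = l powr (-(p-2)*(p/2)) * Y powr p"
      unfolding B_def powr_mult powr_powr by simp
    moreover have "e * X powr p / (p/(p-2)) \<le> e * X powr p"
    proof -
      have "e * X powr p \<ge> 0" using assms by simp
      moreover have "p/(p-2) \<ge> 1" using P1 by simp
      ultimately have "e * X powr p / (p/(p-2)) \<le> e * X powr p / 1"
        by (intro divide_left_mono) auto
      then show ?thesis by simp
    qed
    ultimately show ?thesis unfolding C_def by (simp add: field_simps)
  qed
  then show ?thesis using C by blast
qed

lemma gradient_test_term_le_Young:
  fixes p \<alpha> \<beta> e C a U s G :: real
  assumes p: "p > 2" and \<alpha>: "\<alpha> = \<beta> + (p-2)/2"
    and Young: "\<forall>X Y. X \<ge> 0 \<longrightarrow> Y \<ge> 0 \<longrightarrow> X powr (p-2) * Y powr 2 \<le> e * X powr p + C * Y powr p"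
    and h: "a \<ge> 0" "U > 0" "s \<ge> 0" "G \<ge> 0"
  shows "gpow a (p-2) * U powr (-2*\<alpha>) * s powr (p-2) * G\<^sup>2
    \<le> e * (gpow a (p-2) * U powr (-2*\<alpha>-2) * s powr p * a\<^sup>2) + C * (U powr (-2*\<beta>) * G powr p)"
proof -
  define c where "c = -\<alpha> + (\<alpha>+1)*(p-2)/p"
  define X where "X = a * s * U powr (-(2*\<alpha>+2)/p)"
  define Z where "Z = G * U powr c"
  have ga: "gpow a (p-2) = a powr (p-2)" unfolding gpow_def using p by simp
  have "X powr (p-2) * Z powr 2
      = a powr (p-2) * s powr (p-2) * G\<^sup>2 * (U powr (-(2*\<alpha>+2)/p*(p-2)) * U powr (c*2))"
    unfolding X_def Z_def powr_mult powr_powr using h by (simp add: algebra_simps)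
  also have "U powr (-(2*\<alpha>+2)/p*(p-2)) * U powr (c*2) = U powr (-2*\<alpha>)"
    unfolding powr_add[symmetric] c_def using p by (simp add: field_simps)
  finally have L: "X powr (p-2) * Z powr 2 = gpow a (p-2) * U powr (-2*\<alpha>) * s powr (p-2) * G\<^sup>2"
    unfolding ga by (simp add: algebra_simps)
  have "X powr p = a powr p * s powr p * U powr (-(2*\<alpha>+2)/p*p)"
    unfolding X_def powr_mult powr_powr by simp
  also have "-(2*\<alpha>+2)/p*p = -2*\<alpha>-2" using p by simp
  also have "a powr p = a powr (p-2) * a\<^sup>2"
    using powr_add[of a "p-2" 2] h by simp
  finally have R1: "X powr p = gpow a (p-2) * U powr (-2*\<alpha>-2) * s powr p * a\<^sup>2"
    unfolding ga by (simp add: algebra_simps)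
  have "Z powr p = G powr p * U powr (c*p)" unfolding Z_def powr_mult powr_powr by simp
  also have "c*p = -2*\<beta>" unfolding c_def \<alpha> using p by (simp add: field_simps)
  finally have R2: "Z powr p = U powr (-2*\<beta>) * G powr p" by simp
  have "X \<ge> 0" "Z \<ge> 0" unfolding X_def Z_def using h by auto
  then show ?thesis using Young L R1 R2 by metis
qed

lemma gradient_test_term_le:
  fixes p \<beta> e :: real
  assumes p: "p \<ge> 2" and e: "e > 0"
  obtains C where "C > 0" "\<And>a U s G. a \<ge> 0 \<Longrightarrow> U > 0 \<Longrightarrow> s \<ge> 0 \<Longrightarrow> G \<ge> 0 \<Longrightarrow>
    gpow a (p-2) * U powr (-2*(\<beta> + (p-2)/2)) * s powr (p-2) * G\<^sup>2
    \<le> e * (gpow a (p-2) * U powr (-2*(\<beta> + (p-2)/2)-2) * s powr p * a\<^sup>2) + C * (U powr (-2*\<beta>) * G powr p)"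
proof (cases "p = 2")
  case True
  show thesis
  proof (rule that[of 1])
    fix a U s G :: real assume "a \<ge> 0" "U > 0" "s \<ge> 0" "G \<ge> 0"
    moreover have "U powr (-2*\<beta>) * s powr 0 * G\<^sup>2 \<le> U powr (-2*\<beta>) * 1 * G\<^sup>2"
      by (intro mult_left_mono mult_right_mono) auto
    moreover have "0 \<le> e * (U powr (-2*\<beta>-2) * s powr 2 * a\<^sup>2)" using e by simp
    ultimately show "gpow a (p-2) * U powr (-2*(\<beta> + (p-2)/2)) * s powr (p-2) * G\<^sup>2
      \<le> e * (gpow a (p-2) * U powr (-2*(\<beta> + (p-2)/2)-2) * s powr p * a\<^sup>2) + 1 * (U powr (-2*\<beta>) * G powr p)"
      using True unfolding gpow_def by simp
  qed simp
next
  case False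
  then have "p > 2" using p by simp
  obtain C where "C > 0" and "\<forall>X Y. X \<ge> 0 \<longrightarrow> Y \<ge> 0 \<longrightarrow> X powr (p-2) * Y powr 2 \<le> e * X powr p + C * Y powr p"
    using Young_powr_eps[OF \<open>p > 2\<close> e] by blast
  then show thesis using that gradient_test_term_le_Young[OF \<open>p > 2\<close> refl] by blast
qed

lemma inner_grad_weak_test:
  fixes gu gp :: "'a::euclidean_space" and U s p \<alpha> :: real
  shows "gu \<bullet> (U powr (-2*\<alpha>-1) *\<^sub>R ((p * s powr (p-1)) *\<^sub>R gp) + s powr p *\<^sub>R (((-2*\<alpha>-1) * U powr (-2*\<alpha>-1-1)) *\<^sub>R gu))
    = p * (U powr (-2*\<alpha>-1) * s powr (p-1) * (gu \<bullet> gp)) + (-2*\<alpha>-1) * (U powr (-2*\<alpha>-2) * s powr p * (norm gu)\<^sup>2)"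
proof -
  have e: "-2*\<alpha>-1-1 = -2*\<alpha>-2" by simp
  show ?thesis unfolding e by (simp add: inner_add_right power2_norm_eq_inner algebra_simps)
qed

lemma norm_grad_stability_test_squared:
  fixes gu gp :: "'a::euclidean_space" and U s p \<alpha> :: real
  shows "(norm (U powr (-\<alpha>) *\<^sub>R ((p/2 * s powr (p/2-1)) *\<^sub>R gp) + s powr (p/2) *\<^sub>R ((-\<alpha> * U powr (-\<alpha>-1)) *\<^sub>R gu)))\<^sup>2
    = \<alpha>\<^sup>2 * (U powr (-2*\<alpha>-2) * s powr p * (norm gu)\<^sup>2) - \<alpha>*p*(U powr (-2*\<alpha>-1) * s powr (p-1) * (gu \<bullet> gp))
      + (p\<^sup>2/4) * (U powr (-2*\<alpha>) * s powr (p-2) * (norm gp)\<^sup>2)"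
proof -
  define c1 where "c1 = U powr (-\<alpha>) * (p/2 * s powr (p/2-1))"
  define c2 where "c2 = s powr (p/2) * (-\<alpha> * U powr (-\<alpha>-1))"
  have v: "U powr (-\<alpha>) *\<^sub>R ((p/2 * s powr (p/2-1)) *\<^sub>R gp) + s powr (p/2) *\<^sub>R ((-\<alpha> * U powr (-\<alpha>-1)) *\<^sub>R gu)
     = c1 *\<^sub>R gp + c2 *\<^sub>R gu" unfolding c1_def c2_def by simp
  have n: "(norm (c1 *\<^sub>R gp + c2 *\<^sub>R gu))\<^sup>2 = c1*c1 * (norm gp)\<^sup>2 + 2*(c1*c2) * (gu \<bullet> gp) + c2*c2 * (norm gu)\<^sup>2"
    by (simp add: power2_norm_eq_inner inner_add_left inner_add_right inner_commute algebra_simps)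
  have uu1: "U powr (-\<alpha>) * U powr (-\<alpha>) = U powr (-2*\<alpha>)" by (simp add: powr_add[symmetric] algebra_simps)
  have uu2: "U powr (-\<alpha>-1) * U powr (-\<alpha>-1) = U powr (-2*\<alpha>-2)" by (simp add: powr_add[symmetric] algebra_simps)
  have uu3: "U powr (-\<alpha>) * U powr (-\<alpha>-1) = U powr (-2*\<alpha>-1)" by (simp add: powr_add[symmetric] algebra_simps)
  have ss1: "s powr (p/2-1) * s powr (p/2-1) = s powr (p-2)" by (simp add: powr_add[symmetric] algebra_simps)
  have ss2: "s powr (p/2) * s powr (p/2) = s powr p" by (simp add: powr_add[symmetric] algebra_simps)
  have ss3: "s powr (p/2-1) * s powr (p/2) = s powr (p-1)" by (simp add: powr_add[symmetric] algebra_simps)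
  have a1: "c1*c1 = (p\<^sup>2/4) * U powr (-2*\<alpha>) * s powr (p-2)"
    unfolding c1_def power2_eq_square using uu1 ss1 by (simp add: algebra_simps)
  have a2: "c2*c2 = \<alpha>\<^sup>2 * U powr (-2*\<alpha>-2) * s powr p"
    unfolding c2_def power2_eq_square using uu2 ss2 by (simp add: algebra_simps)
  have a3: "2*(c1*c2) = -\<alpha>*p * U powr (-2*\<alpha>-1) * s powr (p-1)"
    unfolding c1_def c2_def using uu3 ss3
    by (simp add: algebra_simps)
  show ?thesis unfolding v n a1 a2 a3 by (simp add: algebra_simps)
qed

lemma fsing'_lower_bound:
  fixes U s \<delta> \<gamma> \<alpha> :: real
  assumes "U > 0" "\<delta> \<le> \<gamma>" "s \<ge> 0" "0 < \<delta>"
  shows "\<delta> * ((U powr (-\<delta>) + U powr (-\<gamma>)) * U powr (-2*\<alpha>-1) * s powr p)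
    \<le> (\<delta> * U powr (-\<delta>-1) + \<gamma> * U powr (-\<gamma>-1)) * (U powr (-\<alpha>) * s powr (p/2))\<^sup>2"
proof -
  have e1: "U powr (-\<delta>) * U powr (-2*\<alpha>-1) = U powr (-\<delta>-1) * (U powr (-\<alpha>) * U powr (-\<alpha>))"
    by (simp add: powr_add[symmetric] algebra_simps)
  have e2: "U powr (-\<gamma>) * U powr (-2*\<alpha>-1) = U powr (-\<gamma>-1) * (U powr (-\<alpha>) * U powr (-\<alpha>))"
    by (simp add: powr_add[symmetric] algebra_simps)
  have ss2: "s powr (p/2) * s powr (p/2) = s powr p" by (simp add: powr_add[symmetric] algebra_simps)
  have m: "\<delta> * (U powr (-\<gamma>-1) * (U powr (-\<alpha>) * U powr (-\<alpha>)) * s powr p)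
      \<le> \<gamma> * (U powr (-\<gamma>-1) * (U powr (-\<alpha>) * U powr (-\<alpha>)) * s powr p)"
    using assms by (intro mult_right_mono) auto
  have "\<delta> * ((U powr (-\<delta>) + U powr (-\<gamma>)) * U powr (-2*\<alpha>-1) * s powr p)
     = \<delta> * (U powr (-\<delta>-1) * (U powr (-\<alpha>) * U powr (-\<alpha>)) * s powr p)
       + \<delta> * (U powr (-\<gamma>-1) * (U powr (-\<alpha>) * U powr (-\<alpha>)) * s powr p)"
    using e1 e2 by (simp add: algebra_simps)
  also have "\<dots> \<le> \<delta> * (U powr (-\<delta>-1) * (U powr (-\<alpha>) * U powr (-\<alpha>)) * s powr p)
       + \<gamma> * (U powr (-\<gamma>-1) * (U powr (-\<alpha>) * U powr (-\<alpha>)) * s powr p)" using m by simp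
  also have "\<dots> = (\<delta> * U powr (-\<delta>-1) + \<gamma> * U powr (-\<gamma>-1)) * (U powr (-\<alpha>) * s powr (p/2))\<^sup>2"
    unfolding power2_eq_square using ss2 by (simp add: algebra_simps)
  finally show ?thesis .
qed

lemma degenerate_term_le:
  fixes gu v :: "'a::euclidean_space" and W p :: real
  assumes "W \<ge> 0" "p > 2"
  shows "(if gu = 0 then 0 else W * norm gu powr (p-4) * (gu \<bullet> v)\<^sup>2) \<le> W * gpow (norm gu) (p-2) * (norm v)\<^sup>2"
proof (cases "gu = 0")
  case True then show ?thesis using assms unfolding gpow_def by auto
next
  case False
  then have n: "norm gu > 0" by simp
  have cs: "(gu \<bullet> v)\<^sup>2 \<le> (norm gu)\<^sup>2 * (norm v)\<^sup>2"
  proof -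
    have "\<bar>gu \<bullet> v\<bar> \<le> norm gu * norm v" by (rule Cauchy_Schwarz_ineq2)
    then have "\<bar>gu \<bullet> v\<bar>\<^sup>2 \<le> (norm gu * norm v)\<^sup>2" by (intro power_mono) auto
    then show ?thesis by (simp add: power_mult_distrib)
  qed
  have pw: "norm gu powr (p-4) * (norm gu)\<^sup>2 = norm gu powr (p-2)"
  proof -
    have "norm gu powr (p-4) * (norm gu)\<^sup>2 = norm gu powr (p-4) * norm gu powr 2" by simp
    also have "\<dots> = norm gu powr (p-4+2)" by (rule powr_add[symmetric])
    also have "\<dots> = norm gu powr (p-2)" by simp
    finally show ?thesis .
  qed
  have "W * norm gu powr (p-4) * (gu \<bullet> v)\<^sup>2 \<le> W * norm gu powr (p-4) * ((norm gu)\<^sup>2 * (norm v)\<^sup>2)"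
    using cs assms by (intro mult_left_mono) auto
  also have "\<dots> = W * gpow (norm gu) (p-2) * (norm v)\<^sup>2"
    using pw assms unfolding gpow_def by (simp add: algebra_simps)
  finally show ?thesis using False by simp
qed

section \<open>The exponent condition and the elimination of the mixed term\<close>

lemma s_p_exponent_condition:
  fixes p \<delta> \<beta> :: real
  assumes p: "p \<ge> 2" and d: "\<delta> > 0" and b: "0 < \<beta>" "\<beta> < s_p \<delta> p"
  shows "(p-1) * (\<beta> + (p-2)/2)\<^sup>2 < \<delta> * (2*(\<beta> + (p-2)/2) + 1)"
proof (cases "p = 2")
  case True
  have "\<delta> < sqrt (\<delta>\<^sup>2 + \<delta>)" using d by (intro real_less_rsqrt) simp
  moreover have "\<beta> < \<delta> + sqrt (\<delta>\<^sup>2 + \<delta>)" using b True unfolding s_p_def by simp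
  ultimately have "\<bar>\<beta> - \<delta>\<bar> < sqrt (\<delta>\<^sup>2 + \<delta>)" using b by linarith
  then have "\<bar>\<beta> - \<delta>\<bar>\<^sup>2 < (sqrt (\<delta>\<^sup>2 + \<delta>))\<^sup>2" by (intro power_strict_mono) auto
  then have "(\<beta> - \<delta>)\<^sup>2 < \<delta>\<^sup>2 + \<delta>" using d by simp
  then show ?thesis using True by (simp add: power2_eq_square algebra_simps)
next
  case False
  define \<alpha> where "\<alpha> = \<beta> + (p-2)/2"
  have p2: "p > 2" using p False by simp
  have a: "\<alpha> > 0" unfolding \<alpha>_def using b p by (simp add: add_pos_nonneg)
  have "\<beta> < 2*\<delta>/(p-1) - (p-1)/2" using b False unfolding s_p_def by simp
  moreover have "(p-2)/2 = (p-1)/2 - 1/2" by (simp add: field_simps)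
  ultimately have "\<alpha> < 2*\<delta>/(p-1) - 1/2" unfolding \<alpha>_def by linarith
  then have "(p-1)*\<alpha> < (p-1)*(2*\<delta>/(p-1) - 1/2)" using p2 by simp
  also have "\<dots> = 2*\<delta> - (p-1)/2" using p2 by (simp add: field_simps)
  also have "\<dots> < 2*\<delta>" using p2 by simp
  finally have "(p-1)*\<alpha> < 2*\<delta>" .
  then have "\<alpha> * ((p-1)*\<alpha>) < \<alpha> * (2*\<delta>)" using a by simp
  moreover have "(p-1)*\<alpha>\<^sup>2 = \<alpha> * ((p-1)*\<alpha>)" by (simp add: power2_eq_square)
  ultimately show ?thesis using d unfolding \<alpha>_def[symmetric] by (simp add: algebra_simps)
qed

lemma exists_pos_perturbation_lt:
  fixes a t m p :: real
  assumes "a*t < m" "t \<ge> 0" "p > 0"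
  obtains e where "e > 0" "(a + p*e)*t < m"
proof -
  define e where "e = (m - a*t)/(2*p*(t+1))"
  have "p*e*t = (m - a*t) * (t/(2*(t+1)))" unfolding e_def using assms by simp
  also have "\<dots> < (m - a*t) * 1" using assms by (intro mult_strict_left_mono) (auto simp: field_simps)
  finally have "(a + p*e)*t < m" by (simp add: algebra_simps)
  moreover have "e > 0" unfolding e_def using assms by (intro divide_pos_pos mult_pos_pos) auto
  ultimately show thesis using that by blast
qed

text \<open>\<open>I\<close>, \<open>J\<close>, \<open>K\<close>, \<open>F\<close> stand for the integrals of the sketch at the top; the two
  relations are the weak identity and the stability inequality.\<close>
lemma energy_bounds_from_relations:
  fixes p \<alpha> \<delta> :: real
  assumes p: "p \<ge> 2" and a: "\<alpha> > 0" and d: "\<delta> > 0"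
    and cond: "(p-1) * \<alpha>\<^sup>2 < \<delta> * (2*\<alpha> + 1)"
  obtains e M where "e > 0" "M > 0"
    "\<And>I J K F. I \<ge> 0 \<Longrightarrow> K \<ge> 0 \<Longrightarrow> F \<ge> 0 \<Longrightarrow> F = (2*\<alpha>+1)*I - p*J \<Longrightarrow>
       \<delta>*F \<le> (p-1)*(\<alpha>\<^sup>2*I - \<alpha>*p*J + (p\<^sup>2/4)*K) \<Longrightarrow> \<bar>J\<bar> \<le> e*I + (1/(4*e))*K \<Longrightarrow>
       F \<le> M*K \<and> I \<le> M*K"
proof -
  define t where "t = max ((p-1)*\<alpha> - \<delta>) 0"
  define m where "m = (p-1)*(\<alpha>\<^sup>2+\<alpha>)"
  define P where "P = (p-1)*p\<^sup>2/4"
  have m: "m > 0" unfolding m_def using p a by (simp add: add_pos_pos)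
  have t: "t \<ge> 0" unfolding t_def by simp
  have P: "P \<ge> 0" unfolding P_def using p by simp
  have tm: "(2*\<alpha>+1)*t < m"
    using cond m a unfolding t_def m_def by (auto simp: max_def power2_eq_square algebra_simps)
  have "p > 0" using p by simp
  then obtain e where e: "e > 0" and At': "(2*\<alpha>+1 + p*e)*t < m"
    using exists_pos_perturbation_lt[OF tm t] by blast
  define A where "A = 2*\<alpha>+1+p*e"
  define B where "B = p/(4*e)"
  have A: "A > 0" and B: "B > 0" and At: "A*t < m"
    unfolding A_def B_def using e p a At' by (auto simp: add_pos_pos)
  define MI where "MI = (P + t*B)/(m - A*t)"
  have MI: "MI \<ge> 0" unfolding MI_def using At P t B by simp
  define M where "M = (1+A)*MI + B"
  show thesis
  proof (rule that[of e M])
    show "e > 0" "M > 0" using e MI A B unfolding M_def by (auto simp: add_nonneg_pos)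
    fix I J K F :: real
    assume I: "I \<ge> 0" and K: "K \<ge> 0" and F: "F \<ge> 0" and W: "F = (2*\<alpha>+1)*I - p*J"
      and S: "\<delta>*F \<le> (p-1)*(\<alpha>\<^sup>2*I - \<alpha>*p*J + (p\<^sup>2/4)*K)" and Jb: "\<bar>J\<bar> \<le> e*I + (1/(4*e))*K"
    have "\<delta>*F \<le> (p-1)*\<alpha>\<^sup>2*I - (p-1)*(\<alpha>*(p*J)) + P*K"
      using S unfolding P_def by (simp add: algebra_simps)
    also have "\<alpha>*(p*J) = \<alpha>*((2*\<alpha>+1)*I - F)" using W by simp
    also have "(p-1)*\<alpha>\<^sup>2*I - (p-1)*(\<alpha>*((2*\<alpha>+1)*I - F)) + P*K = P*K + (p-1)*\<alpha>*F - m*I"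
      unfolding m_def by (simp add: algebra_simps power2_eq_square)
    finally have "m*I \<le> P*K + ((p-1)*\<alpha> - \<delta>)*F" by (simp add: algebra_simps)
    also have "\<dots> \<le> P*K + t*F" unfolding t_def using F by (intro add_left_mono mult_right_mono) auto
    finally have mI: "m*I \<le> P*K + t*F" .
    have "-J \<le> e*I + (1/(4*e))*K" using Jb by linarith
    then have "p*(-J) \<le> p*(e*I + (1/(4*e))*K)" using p by (intro mult_left_mono) auto
    then have FAB: "F \<le> A*I + B*K" using W unfolding A_def B_def by (simp add: algebra_simps)
    have "m*I \<le> P*K + t*(A*I + B*K)" using mI FAB t by (smt (verit) mult_left_mono)
    then have "(m - A*t)*I \<le> (P + t*B)*K" by (simp add: algebra_simps)
    then have IM: "I \<le> MI*K" unfolding MI_def using At by (simp add: field_simps)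
    have "F \<le> (A*MI + B)*K" using FAB IM A by (smt (verit) distrib_right mult_left_mono mult.assoc)
    moreover have "MI*K \<le> M*K" "(A*MI + B)*K \<le> M*K"
      unfolding M_def using MI A B K by (auto intro!: mult_right_mono simp: algebra_simps)
    ultimately show "F \<le> M*K \<and> I \<le> M*K" using IM by linarith
  qed
qed


section \<open>Integral relations for a stable solution\<close>

lemma C1c_test_function:
  fixes u \<psi> :: "'a::euclidean_space \<Rightarrow> real"
  assumes "C1 u" "\<forall>x. u x > 0" "C1c \<psi>" "\<forall>x. \<psi> x \<ge> 0" "r \<ge> 1"
  shows "C1c (\<lambda>x. u x powr e * \<psi> x powr r)"
proof -
  have "C1 (\<lambda>x. u x powr e * \<psi> x powr r)"
    using assms unfolding C1c_def by (intro C1_mult C1_powr) (auto simp: less_imp_le)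
  moreover have "bounded {x. u x powr e * \<psi> x powr r \<noteq> 0}"
    using assms(3) unfolding C1c_def by (rule conjE) (erule bounded_subset, auto)
  ultimately show ?thesis unfolding C1c_def by blast
qed

lemma grad_test_function:
  fixes u \<psi> :: "'a::euclidean_space \<Rightarrow> real"
  assumes "C1 u" "\<forall>x. u x > 0" "C1 \<psi>" "\<forall>x. \<psi> x \<ge> 0" "r \<ge> 1"
  shows "grad (\<lambda>x. u x powr e * \<psi> x powr r) x
    = u x powr e *\<^sub>R ((r * \<psi> x powr (r-1)) *\<^sub>R grad \<psi> x) + \<psi> x powr r *\<^sub>R ((e * u x powr (e-1)) *\<^sub>R grad u x)"
proof -
  have u: "\<forall>x. u x \<ge> 0" using assms(2) by (simp add: less_imp_le)
  show ?thesis
    using assms u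
    by (simp add: grad_mult C1_powr grad_powr)
qed

locale stable_solution =
  fixes w g u :: "'a::euclidean_space \<Rightarrow> real" and p \<delta> \<gamma> :: real
  assumes p: "p \<ge> 2"
    and w_loc: "locally_integrable w" and g_loc: "locally_integrable g"
    and w_pos: "AE x in lborel. w x > 0" and g_pos: "AE x in lborel. g x > 0"
    and \<delta>_pos: "0 < \<delta>" and \<delta>_le_\<gamma>: "\<delta> \<le> \<gamma>"
    and u_C1: "C1 u" and u_pos: "\<forall>x. u x > 0"
    and weak: "weak_solution p \<delta> \<gamma> w g u" and stable: "stable p \<delta> \<gamma> w g u"
begin

abbreviation w_integral :: "('a \<Rightarrow> real) \<Rightarrow> real" where
  "w_integral h \<equiv> \<integral>x. w x * h x \<partial>lborel"

abbreviation g_integral :: "('a \<Rightarrow> real) \<Rightarrow> real" where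
  "g_integral h \<equiv> \<integral>x. g x * h x \<partial>lborel"

text \<open>The integrands of \<open>I\<close>, \<open>J\<close>, \<open>K\<close> and \<open>F\<close> from the sketch at the top.\<close>
definition grad_u_term :: "real \<Rightarrow> ('a \<Rightarrow> real) \<Rightarrow> 'a \<Rightarrow> real" where
  "grad_u_term \<alpha> \<psi> x = gpow (norm (grad u x)) (p-2) * u x powr (-2*\<alpha>-2) * \<psi> x powr p * (norm (grad u x))\<^sup>2"

definition mixed_term :: "real \<Rightarrow> ('a \<Rightarrow> real) \<Rightarrow> 'a \<Rightarrow> real" where
  "mixed_term \<alpha> \<psi> x = gpow (norm (grad u x)) (p-2) * u x powr (-2*\<alpha>-1) * \<psi> x powr (p-1) * (grad u x \<bullet> grad \<psi> x)"

definition grad_psi_term :: "real \<Rightarrow> ('a \<Rightarrow> real) \<Rightarrow> 'a \<Rightarrow> real" where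
  "grad_psi_term \<alpha> \<psi> x = gpow (norm (grad u x)) (p-2) * u x powr (-2*\<alpha>) * \<psi> x powr (p-2) * (norm (grad \<psi> x))\<^sup>2"

definition source_term :: "real \<Rightarrow> ('a \<Rightarrow> real) \<Rightarrow> 'a \<Rightarrow> real" where
  "source_term \<alpha> \<psi> x = (u x powr (-\<delta>) + u x powr (-\<gamma>)) * u x powr (-2*\<alpha>-1) * \<psi> x powr p"

lemma u_measurable [measurable]: "u \<in> borel_measurable borel" "grad u \<in> borel_measurable borel"
  using u_C1 by (simp_all add: C1_borel_measurable C1_grad_borel_measurable)

lemma gpow_nonneg: "gpow r (p-2) \<ge> 0"
  unfolding gpow_def by simp

lemma gpow_grad_u_measurable [measurable]:
  "(\<lambda>x. gpow (norm (grad u x)) (p-2)) \<in> borel_measurable borel"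
  unfolding gpow_def by measurable

lemma bdd_on_compact_factors:
  assumes "C1 \<psi>" "\<forall>x. \<psi> x \<ge> 0" "compact S"
  shows "bdd_on S (\<lambda>x. u x powr e)" "r \<ge> 0 \<Longrightarrow> bdd_on S (\<lambda>x. \<psi> x powr r)"
    "bdd_on S (\<lambda>x. norm (grad u x))" "bdd_on S (\<lambda>x. norm (grad \<psi> x))"
    "bdd_on S (\<lambda>x. grad u x \<bullet> grad \<psi> x)" "bdd_on S (\<lambda>x. gpow (norm (grad u x)) (p-2))"
proof -
  have cu: "continuous_on S u" "continuous_on S \<psi>" using C1_imp_continuous_on u_C1 assms(1) by auto
  have cg: "continuous_on S (grad u)" "continuous_on S (grad \<psi>)"
    using u_C1 assms(1) continuous_on_subset unfolding C1_def by blast+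
  show "bdd_on S (\<lambda>x. u x powr e)"
    using cu u_pos
    by (intro bdd_on_continuous_on[OF assms(3)] continuous_on_powr') (auto simp: less_imp_le less_imp_neq[symmetric])
  show "r \<ge> 0 \<Longrightarrow> bdd_on S (\<lambda>x. \<psi> x powr r)"
    by (rule bdd_on_powr[OF bdd_on_continuous_on[OF assms(3) cu(2)] assms(2)])
  show nu: "bdd_on S (\<lambda>x. norm (grad u x))" "bdd_on S (\<lambda>x. norm (grad \<psi> x))"
    "bdd_on S (\<lambda>x. grad u x \<bullet> grad \<psi> x)"
    by (rule bdd_on_continuous_on[OF assms(3)], intro continuous_intros cg)+
  show "bdd_on S (\<lambda>x. gpow (norm (grad u x)) (p-2))"
    using p bdd_on_powr[OF nu(1)] bdd_on_const unfolding gpow_def by (cases "p = 2") auto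
qed

lemma integrable_terms:
  assumes \<psi>: "C1c \<psi>" "\<forall>x. \<psi> x \<ge> 0"
  shows "integrable lborel (\<lambda>x. w x * grad_u_term \<alpha> \<psi> x)"
    "integrable lborel (\<lambda>x. w x * mixed_term \<alpha> \<psi> x)"
    "integrable lborel (\<lambda>x. w x * grad_psi_term \<alpha> \<psi> x)"
    "integrable lborel (\<lambda>x. g x * source_term \<alpha> \<psi> x)"
    "integrable lborel (\<lambda>x. w x * (u x powr e * norm (grad \<psi> x) powr p))"
    "integrable lborel (\<lambda>x. g x * (fsing' \<delta> \<gamma> (u x) * (u x powr e * \<psi> x powr (p/2))\<^sup>2))"
proof -
  define S where "S = {x. \<psi> x \<noteq> 0}"
  have C1: "C1 \<psi>" and S: "bounded S" using \<psi>(1) unfolding C1c_def S_def by auto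
  have K: "compact (closure S)" using S by (simp add: compact_closure)
  have [measurable]: "\<psi> \<in> borel_measurable borel" "grad \<psi> \<in> borel_measurable borel"
    using C1 by (simp_all add: C1_borel_measurable C1_grad_borel_measurable)
  have grad0: "grad \<psi> x = 0" if "x \<notin> S" for x
    using grad_eq_0_at_minimum[OF C1 \<psi>(2)] that unfolding S_def by simp
  have out: "x \<notin> S \<Longrightarrow> \<psi> x = 0" for x unfolding S_def by simp
  note b = bdd_on_compact_factors[OF C1 \<psi>(2) K]
  note I = integrable_mult_bounded_support[OF w_loc S] integrable_mult_bounded_support[OF g_loc S]
  show "integrable lborel (\<lambda>x. w x * grad_u_term \<alpha> \<psi> x)"
    by (rule I(1), unfold grad_u_term_def power2_eq_square)
      (measurable, use p out in \<open>auto intro!: bdd_on_mult b\<close>)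
  show "integrable lborel (\<lambda>x. w x * mixed_term \<alpha> \<psi> x)"
    by (rule I(1), unfold mixed_term_def) (measurable, use p out in \<open>auto intro!: bdd_on_mult b\<close>)
  show "integrable lborel (\<lambda>x. w x * grad_psi_term \<alpha> \<psi> x)"
    by (rule I(1), unfold grad_psi_term_def power2_eq_square)
      (measurable, use p out in \<open>auto intro!: bdd_on_mult b\<close>)
  show "integrable lborel (\<lambda>x. g x * source_term \<alpha> \<psi> x)"
    by (rule I(2), unfold source_term_def)
      (measurable, use p out in \<open>auto intro!: bdd_on_mult bdd_on_add b\<close>)
  show "integrable lborel (\<lambda>x. w x * (u x powr e * norm (grad \<psi> x) powr p))"
    by (rule I(1)) (measurable, use p grad0 in \<open>auto intro!: bdd_on_mult b bdd_on_powr\<close>)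
  show "integrable lborel (\<lambda>x. g x * (fsing' \<delta> \<gamma> (u x) * (u x powr e * \<psi> x powr (p/2))\<^sup>2))"
    by (rule I(2), unfold fsing'_def power2_eq_square)
      (measurable, use p out in \<open>auto intro!: bdd_on_mult bdd_on_add bdd_on_const b\<close>)
qed

lemma integrals_nonneg:
  assumes "\<forall>x. \<psi> x \<ge> 0"
  shows "w_integral (grad_u_term \<alpha> \<psi>) \<ge> 0" "w_integral (grad_psi_term \<alpha> \<psi>) \<ge> 0"
    "g_integral (source_term \<alpha> \<psi>) \<ge> 0"
  using w_pos g_pos assms gpow_nonneg
  by (auto intro!: integral_nonneg_AE elim: eventually_mono
      simp: grad_u_term_def grad_psi_term_def source_term_def)

lemma weak_identity:
  assumes \<psi>: "C1c \<psi>" "\<forall>x. \<psi> x \<ge> 0"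
  shows "g_integral (source_term \<alpha> \<psi>)
    = (2*\<alpha>+1) * w_integral (grad_u_term \<alpha> \<psi>) - p * w_integral (mixed_term \<alpha> \<psi>)"
proof -
  define \<phi> where "\<phi> = (\<lambda>x. u x powr (-2*\<alpha>-1) * \<psi> x powr p)"
  have "C1c \<phi>" unfolding \<phi>_def using C1c_test_function[OF u_C1 u_pos \<psi>] p by simp
  then have weak_\<phi>: "(\<integral>x. w x * gpow (norm (grad u x)) (p-2) * (grad u x \<bullet> grad \<phi> x) \<partial>lborel)
      = (\<integral>x. g x * fsing \<delta> \<gamma> (u x) * \<phi> x \<partial>lborel)"
    using weak unfolding weak_solution_def by blast
  have grad_\<phi>: "grad \<phi> x = u x powr (-2*\<alpha>-1) *\<^sub>R ((p * \<psi> x powr (p-1)) *\<^sub>R grad \<psi> x)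
      + \<psi> x powr p *\<^sub>R (((-2*\<alpha>-1) * u x powr (-2*\<alpha>-1-1)) *\<^sub>R grad u x)" for x
    unfolding \<phi>_def using \<psi> p by (intro grad_test_function[OF u_C1 u_pos]) (auto simp: C1c_def)
  have lhs: "(\<lambda>x. w x * gpow (norm (grad u x)) (p-2) * (grad u x \<bullet> grad \<phi> x))
      = (\<lambda>x. p * (w x * mixed_term \<alpha> \<psi> x) + (-2*\<alpha>-1) * (w x * grad_u_term \<alpha> \<psi> x))"
    unfolding grad_\<phi> inner_grad_weak_test mixed_term_def grad_u_term_def by (simp add: algebra_simps)
  have rhs: "(\<lambda>x. g x * fsing \<delta> \<gamma> (u x) * \<phi> x) = (\<lambda>x. - (g x * source_term \<alpha> \<psi> x))"
    unfolding \<phi>_def fsing_def source_term_def by (simp add: algebra_simps)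
  have "p * w_integral (mixed_term \<alpha> \<psi>) + (-2*\<alpha>-1) * w_integral (grad_u_term \<alpha> \<psi>)
      = - g_integral (source_term \<alpha> \<psi>)"
    using weak_\<phi> integrable_terms[OF \<psi>] unfolding lhs rhs by simp
  then show ?thesis by (simp add: algebra_simps)
qed

text \<open>The second term of the stability form is dominated by the first (Cauchy--Schwarz), so
  stability bounds the potential term by \<open>p - 1\<close> times the first one.\<close>
lemma stability_bound:
  assumes "C1c \<phi>"
    and int: "integrable lborel (\<lambda>x. w x * gpow (norm (grad u x)) (p-2) * (norm (grad \<phi> x))\<^sup>2)"
  shows "(\<integral>x. g x * fsing' \<delta> \<gamma> (u x) * (\<phi> x)\<^sup>2 \<partial>lborel)
    \<le> (p-1) * (\<integral>x. w x * gpow (norm (grad u x)) (p-2) * (norm (grad \<phi> x))\<^sup>2 \<partial>lborel)"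
proof -
  define T1 where "T1 = (\<integral>x. w x * gpow (norm (grad u x)) (p-2) * (norm (grad \<phi> x))\<^sup>2 \<partial>lborel)"
  define T2 where "T2 = (\<integral>x. (if grad u x = 0 then 0 else
    w x * norm (grad u x) powr (p-4) * (grad u x \<bullet> grad \<phi> x)\<^sup>2) \<partial>lborel)"
  have "T1 \<ge> 0" unfolding T1_def
    using w_pos gpow_nonneg by (auto intro!: integral_nonneg_AE elim!: eventually_mono)
  have "(p-2) * T2 \<le> (p-2) * T1"
  proof (cases "p = 2")
    case False
    then have p2: "p > 2" using p by simp
    have "T2 \<le> T1"
    proof (cases "integrable lborel (\<lambda>x. if grad u x = 0 then 0 else
        w x * norm (grad u x) powr (p-4) * (grad u x \<bullet> grad \<phi> x)\<^sup>2)")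
      case True
      have "AE x in lborel. (if grad u x = 0 then 0 else
          w x * norm (grad u x) powr (p-4) * (grad u x \<bullet> grad \<phi> x)\<^sup>2)
          \<le> w x * gpow (norm (grad u x)) (p-2) * (norm (grad \<phi> x))\<^sup>2"
        using w_pos by eventually_elim (rule degenerate_term_le[OF _ p2], simp)
      then show ?thesis unfolding T1_def T2_def by (rule integral_mono_AE[OF True int])
    next
      case False
      then show ?thesis using \<open>T1 \<ge> 0\<close> unfolding T2_def by (simp add: not_integrable_integral_eq)
    qed
    then show ?thesis using p by (intro mult_left_mono) auto
  qed simp
  moreover have "T1 + (p-2) * T2 - (\<integral>x. g x * fsing' \<delta> \<gamma> (u x) * (\<phi> x)\<^sup>2 \<partial>lborel) \<ge> 0"
    using stable assms(1) unfolding stable_def T1_def T2_def by blast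
  ultimately show ?thesis unfolding T1_def[symmetric] by (simp add: algebra_simps)
qed

lemma stability_inequality:
  assumes \<psi>: "C1c \<psi>" "\<forall>x. \<psi> x \<ge> 0"
  shows "\<delta> * g_integral (source_term \<alpha> \<psi>) \<le> (p-1) * (\<alpha>\<^sup>2 * w_integral (grad_u_term \<alpha> \<psi>)
    - \<alpha>*p * w_integral (mixed_term \<alpha> \<psi>) + (p\<^sup>2/4) * w_integral (grad_psi_term \<alpha> \<psi>))"
proof -
  define \<phi> where "\<phi> = (\<lambda>x. u x powr (-\<alpha>) * \<psi> x powr (p/2))"
  note integrable = integrable_terms[OF \<psi>]
  have \<phi>: "C1c \<phi>" unfolding \<phi>_def using C1c_test_function[OF u_C1 u_pos \<psi>] p by simp
  have grad_\<phi>: "grad \<phi> x = u x powr (-\<alpha>) *\<^sub>R ((p/2 * \<psi> x powr (p/2-1)) *\<^sub>R grad \<psi> x)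
      + \<psi> x powr (p/2) *\<^sub>R ((-\<alpha> * u x powr (-\<alpha>-1)) *\<^sub>R grad u x)" for x
    unfolding \<phi>_def using \<psi> p by (intro grad_test_function[OF u_C1 u_pos]) (auto simp: C1c_def)
  have expand: "(\<lambda>x. w x * gpow (norm (grad u x)) (p-2) * (norm (grad \<phi> x))\<^sup>2)
     = (\<lambda>x. \<alpha>\<^sup>2 * (w x * grad_u_term \<alpha> \<psi> x) - \<alpha>*p * (w x * mixed_term \<alpha> \<psi> x)
          + (p\<^sup>2/4) * (w x * grad_psi_term \<alpha> \<psi> x))"
    unfolding grad_\<phi> norm_grad_stability_test_squared grad_u_term_def mixed_term_def grad_psi_term_def
    by (simp add: algebra_simps)
  have "\<delta> * g_integral (source_term \<alpha> \<psi>) = (\<integral>x. \<delta> * (g x * source_term \<alpha> \<psi> x) \<partial>lborel)"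
    by simp
  also have "\<dots> \<le> (\<integral>x. g x * fsing' \<delta> \<gamma> (u x) * (\<phi> x)\<^sup>2 \<partial>lborel)"
  proof (rule integral_mono_AE)
    show "AE x in lborel. \<delta> * (g x * source_term \<alpha> \<psi> x) \<le> g x * fsing' \<delta> \<gamma> (u x) * (\<phi> x)\<^sup>2"
      using g_pos
    proof eventually_elim
      case (elim x)
      have "\<delta> * source_term \<alpha> \<psi> x \<le> fsing' \<delta> \<gamma> (u x) * (\<phi> x)\<^sup>2"
        unfolding source_term_def fsing'_def \<phi>_def
        by (rule fsing'_lower_bound) (use u_pos \<delta>_le_\<gamma> \<psi>(2) \<delta>_pos in auto)
      then show ?case using elim by (simp add: mult_left_mono algebra_simps)
    qed
  qed (use integrable in \<open>auto simp: \<phi>_def mult.assoc\<close>)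
  also have "\<dots> \<le> (p-1) * (\<integral>x. w x * gpow (norm (grad u x)) (p-2) * (norm (grad \<phi> x))\<^sup>2 \<partial>lborel)"
    by (rule stability_bound[OF \<phi>]) (use integrable in \<open>simp add: expand\<close>)
  also have "\<dots> = (p-1) * (\<alpha>\<^sup>2 * w_integral (grad_u_term \<alpha> \<psi>)
    - \<alpha>*p * w_integral (mixed_term \<alpha> \<psi>) + (p\<^sup>2/4) * w_integral (grad_psi_term \<alpha> \<psi>))"
    using integrable by (simp add: expand)
  finally show ?thesis .
qed

lemma mixed_integral_bound:
  assumes \<psi>: "C1c \<psi>" "\<forall>x. \<psi> x \<ge> 0" and e: "e > 0"
  shows "\<bar>w_integral (mixed_term \<alpha> \<psi>)\<bar>
    \<le> e * w_integral (grad_u_term \<alpha> \<psi>) + (1/(4*e)) * w_integral (grad_psi_term \<alpha> \<psi>)"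
proof -
  note integrable = integrable_terms[OF \<psi>]
  have pointwise: "\<bar>w x * mixed_term \<alpha> \<psi> x\<bar>
      \<le> e * (w x * grad_u_term \<alpha> \<psi> x) + (1/(4*e)) * (w x * grad_psi_term \<alpha> \<psi> x)"
    if "w x > 0" for x
  proof -
    define W where "W = w x * gpow (norm (grad u x)) (p-2)"
    have W: "W \<ge> 0" unfolding W_def using that gpow_nonneg by simp
    have "\<bar>u x powr (-2*\<alpha>-1) * \<psi> x powr (p-1) * (grad u x \<bullet> grad \<psi> x)\<bar>
        \<le> e * (u x powr (-2*\<alpha>-2) * \<psi> x powr p * (norm (grad u x))\<^sup>2)
          + (1/(4*e)) * (u x powr (-2*\<alpha>) * \<psi> x powr (p-2) * (norm (grad \<psi> x))\<^sup>2)"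
      by (rule abs_mixed_term_le) (use u_pos \<psi>(2) e Cauchy_Schwarz_ineq2 in auto)
    then have "W * \<bar>u x powr (-2*\<alpha>-1) * \<psi> x powr (p-1) * (grad u x \<bullet> grad \<psi> x)\<bar>
        \<le> W * (e * (u x powr (-2*\<alpha>-2) * \<psi> x powr p * (norm (grad u x))\<^sup>2)
          + (1/(4*e)) * (u x powr (-2*\<alpha>) * \<psi> x powr (p-2) * (norm (grad \<psi> x))\<^sup>2))"
      using W by (rule mult_left_mono)
    then show ?thesis using W
      unfolding W_def mixed_term_def grad_u_term_def grad_psi_term_def
      by (simp add: abs_mult abs_of_pos[OF that] abs_of_nonneg[OF gpow_nonneg] algebra_simps)
  qed
  have "\<bar>w_integral (mixed_term \<alpha> \<psi>)\<bar> \<le> (\<integral>x. \<bar>w x * mixed_term \<alpha> \<psi> x\<bar> \<partial>lborel)"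
    by (rule integral_abs_bound)
  also have "\<dots> \<le> (\<integral>x. e * (w x * grad_u_term \<alpha> \<psi> x) + (1/(4*e)) * (w x * grad_psi_term \<alpha> \<psi> x) \<partial>lborel)"
    using integrable w_pos pointwise by (intro integral_mono_AE) (auto elim: eventually_mono)
  also have "\<dots> = e * w_integral (grad_u_term \<alpha> \<psi>) + (1/(4*e)) * w_integral (grad_psi_term \<alpha> \<psi>)"
    using integrable by simp
  finally show ?thesis .
qed

lemma grad_psi_integral_le:
  assumes "e > 0"
  obtains C where "C > 0"
    "\<And>\<psi>. C1c \<psi> \<Longrightarrow> \<forall>x. \<psi> x \<ge> 0 \<Longrightarrow>
      w_integral (grad_psi_term (\<beta> + (p-2)/2) \<psi>) \<le> e * w_integral (grad_u_term (\<beta> + (p-2)/2) \<psi>)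
        + C * w_integral (\<lambda>x. u x powr (-2*\<beta>) * norm (grad \<psi> x) powr p)"
proof -
  obtain C where "C > 0" and pointwise: "\<And>a U s G. a \<ge> 0 \<Longrightarrow> U > 0 \<Longrightarrow> s \<ge> 0 \<Longrightarrow> G \<ge> 0 \<Longrightarrow>
    gpow a (p-2) * U powr (-2*(\<beta> + (p-2)/2)) * s powr (p-2) * G\<^sup>2
    \<le> e * (gpow a (p-2) * U powr (-2*(\<beta> + (p-2)/2)-2) * s powr p * a\<^sup>2) + C * (U powr (-2*\<beta>) * G powr p)"
    using gradient_test_term_le[OF p assms] by blast
  show thesis
  proof (rule that[OF \<open>C > 0\<close>])
    fix \<psi> :: "'a \<Rightarrow> real" assume \<psi>: "C1c \<psi>" "\<forall>x. \<psi> x \<ge> 0"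
    note integrable = integrable_terms[OF \<psi>]
    define \<alpha> where "\<alpha> = \<beta> + (p-2)/2"
    have "w_integral (grad_psi_term \<alpha> \<psi>)
        \<le> (\<integral>x. e * (w x * grad_u_term \<alpha> \<psi> x) + C * (w x * (u x powr (-2*\<beta>) * norm (grad \<psi> x) powr p)) \<partial>lborel)"
    proof (rule integral_mono_AE)
      show "AE x in lborel. w x * grad_psi_term \<alpha> \<psi> x
          \<le> e * (w x * grad_u_term \<alpha> \<psi> x) + C * (w x * (u x powr (-2*\<beta>) * norm (grad \<psi> x) powr p))"
        using w_pos
      proof eventually_elim
        case (elim x)
        have "grad_psi_term \<alpha> \<psi> x \<le> e * grad_u_term \<alpha> \<psi> x + C * (u x powr (-2*\<beta>) * norm (grad \<psi> x) powr p)"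
          using pointwise u_pos \<psi>(2) unfolding grad_psi_term_def grad_u_term_def \<alpha>_def by simp
        then have "w x * grad_psi_term \<alpha> \<psi> x
            \<le> w x * (e * grad_u_term \<alpha> \<psi> x + C * (u x powr (-2*\<beta>) * norm (grad \<psi> x) powr p))"
          using elim by (intro mult_left_mono) auto
        then show ?case by (simp add: algebra_simps)
      qed
    qed (use integrable in auto)
    also have "\<dots> = e * w_integral (grad_u_term \<alpha> \<psi>) + C * w_integral (\<lambda>x. u x powr (-2*\<beta>) * norm (grad \<psi> x) powr p)"
      using integrable by simp
    finally show "w_integral (grad_psi_term (\<beta> + (p-2)/2) \<psi>) \<le> e * w_integral (grad_u_term (\<beta> + (p-2)/2) \<psi>)
        + C * w_integral (\<lambda>x. u x powr (-2*\<beta>) * norm (grad \<psi> x) powr p)"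
      unfolding \<alpha>_def .
  qed
qed

theorem weighted_estimate:
  assumes \<beta>: "0 < \<beta>" "\<beta> < s_p \<delta> p"
  shows "\<exists>c>0. \<forall>\<psi>. C1c \<psi> \<and> (\<forall>x. \<psi> x \<ge> 0) \<longrightarrow>
    (\<integral>x. g x * (u x powr (-\<delta>) + u x powr (-\<gamma>)) * u x powr (-2*\<beta>-p+1) * \<psi> x powr p \<partial>lborel)
    \<le> c * (\<integral>x. w x * u x powr (-2*\<beta>) * norm (grad \<psi> x) powr p \<partial>lborel)"
proof -
  define \<alpha> where "\<alpha> = \<beta> + (p-2)/2"
  have "\<alpha> > 0" unfolding \<alpha>_def using \<beta> p by (simp add: add_pos_nonneg)
  obtain e M where "e > 0" "M > 0" and energy_bounds:
    "\<And>I J K F. I \<ge> 0 \<Longrightarrow> K \<ge> 0 \<Longrightarrow> F \<ge> 0 \<Longrightarrow> F = (2*\<alpha>+1)*I - p*J \<Longrightarrow>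
       \<delta>*F \<le> (p-1)*(\<alpha>\<^sup>2*I - \<alpha>*p*J + (p\<^sup>2/4)*K) \<Longrightarrow> \<bar>J\<bar> \<le> e*I + (1/(4*e))*K \<Longrightarrow>
       F \<le> M*K \<and> I \<le> M*K"
    using energy_bounds_from_relations[OF p \<open>\<alpha> > 0\<close> \<delta>_pos]
      s_p_exponent_condition[OF p \<delta>_pos \<beta>] unfolding \<alpha>_def by blast
  obtain C where "C > 0" and K_bound: "\<And>\<psi>. C1c \<psi> \<Longrightarrow> \<forall>x. \<psi> x \<ge> 0 \<Longrightarrow>
      w_integral (grad_psi_term \<alpha> \<psi>) \<le> 1/(2*M) * w_integral (grad_u_term \<alpha> \<psi>)
        + C * w_integral (\<lambda>x. u x powr (-2*\<beta>) * norm (grad \<psi> x) powr p)"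
    using grad_psi_integral_le[of "1/(2*M)" \<beta>] \<open>M > 0\<close> unfolding \<alpha>_def by auto
  show ?thesis
  proof (intro exI[of _ "2*M*C"] conjI allI impI)
    show "2*M*C > 0" using \<open>M > 0\<close> \<open>C > 0\<close> by simp
    fix \<psi> :: "'a \<Rightarrow> real" assume "C1c \<psi> \<and> (\<forall>x. \<psi> x \<ge> 0)"
    then have \<psi>: "C1c \<psi>" "\<forall>x. \<psi> x \<ge> 0" by auto
    define I where "I = w_integral (grad_u_term \<alpha> \<psi>)"
    define K where "K = w_integral (grad_psi_term \<alpha> \<psi>)"
    define F where "F = g_integral (source_term \<alpha> \<psi>)"
    define L where "L = w_integral (\<lambda>x. u x powr (-2*\<beta>) * norm (grad \<psi> x) powr p)"
    have FI: "F \<le> M*K \<and> I \<le> M*K"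
      using energy_bounds integrals_nonneg[OF \<psi>(2)] weak_identity[OF \<psi>] stability_inequality[OF \<psi>]
        mixed_integral_bound[OF \<psi> \<open>e > 0\<close>] unfolding I_def K_def F_def by blast
    have "K \<le> 1/(2*M) * I + C*L" using K_bound[OF \<psi>] unfolding I_def K_def L_def .
    also have "\<dots> \<le> 1/(2*M) * (M*K) + C*L" using FI \<open>M > 0\<close> by (intro add_right_mono mult_left_mono) auto
    also have "\<dots> = K/2 + C*L" using \<open>M > 0\<close> by simp
    finally have "K \<le> 2*C*L" by simp
    then have "F \<le> M*(2*C*L)" using FI \<open>M > 0\<close> by (smt (verit) mult_left_mono)
    moreover have exponent: "-2*\<beta>-p+1 = -2*\<alpha>-1" unfolding \<alpha>_def by (simp add: field_simps)
    ultimately show "(\<integral>x. g x * (u x powr (-\<delta>) + u x powr (-\<gamma>)) * u x powr (-2*\<beta>-p+1) * \<psi> x powr p \<partial>lborel)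
      \<le> 2*M*C * (\<integral>x. w x * u x powr (-2*\<beta>) * norm (grad \<psi> x) powr p \<partial>lborel)"
      unfolding exponent F_def L_def source_term_def by (simp add: mult.assoc mult.left_commute)
  qed
qed

end

theorem mainTheorem2:
  fixes w g u :: "'a::euclidean_space \<Rightarrow> real" and p \<delta> \<gamma> :: real
  assumes "p \<ge> 2"
    and "locally_integrable w" and "locally_integrable g"
    and "AE x in lborel. w x > 0" and "AE x in lborel. g x > 0"
    and "0 < \<delta>" and "\<delta> \<le> \<gamma>" and "P_b \<delta> p"
    and "C1 u" and "\<forall>x. u x > 0"
    and "weak_solution p \<delta> \<gamma> w g u" and "stable p \<delta> \<gamma> w g u"
  shows "\<forall>\<beta>. 0 < \<beta> \<and> \<beta> < s_p \<delta> p \<longrightarrow>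
           (\<exists>c>0. \<forall>\<psi>. C1c \<psi> \<and> (\<forall>x. \<psi> x \<ge> 0) \<longrightarrow>
              (\<integral>x. g x * (u x powr (-\<delta>) + u x powr (-\<gamma>)) * u x powr (-2*\<beta>-p+1)
                     * \<psi> x powr p \<partial>lborel)
              \<le> c * (\<integral>x. w x * u x powr (-2*\<beta>) * norm (grad \<psi> x) powr p \<partial>lborel))"
proof -
  interpret stable_solution w g u p \<delta> \<gamma>
    using assms by unfold_locales auto
  show ?thesis using weighted_estimate by blast
qed

end
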